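(* Let $T\ge 1$ be an integer, $\Delta t>0$, $E_0\in\mathbb{R}$, $P_{\max}>0$, charging and discharging efficiencies $\eta_{c},\eta_{d}\in(0,1]$, and a net-charge efficiency $\eta\in[\eta_{c},\tfrac{1}{\eta_{d}}]$. Let $\mathbf{A}\in\mathbb{R}^{T\times T}$ be the lower triangular matrix with $\mathbf{A}_{lk}=\Delta t$ for $k\le l$ and $\mathbf{A}_{lk}=0$ for $k>l$, and let $\mathbf{1}_T=(1,\dots,1)^\top\in\mathbb{R}^T$. Let $\mathbf{P}_c,\mathbf{P}_d,\mathbf{P}^r_c,\mathbf{P}^r_d\in[0,P_{\max}]^T$ and $\mathbf{P}_b\in\mathbb{R}^T$ be such that $$\mathbf{P}_b=\mathbf{P}_c-\mathbf{P}_d=\mathbf{P}^r_c-\mathbf{P}^r_d,$$ with $\mathbf{P}_c\cdot\mathbf{P}_d=\mathbf{0}$ and $\mathbf{P}^r_c\cdot\mathbf{P}^r_d\ge\mathbf{0}$ (componentwise products). Define the SoC trajectories $$\mathbf{E}(\mathbf{P}_c,\mathbf{P}_d)=\mathbf{1}_TE_0+\eta_c\mathbf{A}\mathbf{P}_c-\tfrac{1}{\eta_d}\mathbf{A}\mathbf{P}_d,\qquad \mathbf{E}^r(\mathbf{P}^r_c,\mathbf{P}^r_d)=\mathbf{1}_TE_0+\eta_c\mathbf{A}\mathbf{P}^r_c-\tfrac{1}{\eta_d}\mathbf{A}\mathbf{P}^r_d,$$ $$\mathbf{E}^s(\mathbf{P}_b)=\mathbf{1}_TE_0+\eta\,\mathbf{A}\mathbf{P}_b.$$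 Then, componentwise, $$\mathbf{E}^r(\mathbf{P}^r_c,\mathbf{P}^r_d)\le\mathbf{E}(\mathbf{P}_c,\mathbf{P}_d)\le\mathbf{E}^s(\mathbf{P}_b).$$
   Context: This models a battery over time steps $k=0,\dots,T-1$ of duration $\Delta t$: $\mathbf{E}$ is the actual (standard-model) state-of-charge trajectory under charging input $\mathbf{P}_c$ and discharging input $\mathbf{P}_d$ that are never simultaneously nonzero; $\mathbf{E}^r$ is the trajectory of the relaxed model, in which simultaneous charging and discharging is allowed; $\mathbf{E}^s$ is the trajectory of the simplified one-input model driven by the net-charging input $\mathbf{P}_b$ with a single efficiency $\eta$. Vector inequalities and products are taken componentwise. *)

theory Defs
  imports Main "HOL.Real"
begin

text \<open>Vectors in R^T are modelled as functions nat => real, of which only indices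
  0..T-1 matter; T x T matrices as nat => nat => real.\<close>

definition Amat :: "real \<Rightarrow> nat \<Rightarrow> nat \<Rightarrow> real" where
  "Amat dt l k = (if k \<le> l then dt else 0)"

definition mulv :: "nat \<Rightarrow> (nat \<Rightarrow> nat \<Rightarrow> real) \<Rightarrow> (nat \<Rightarrow> real) \<Rightarrow> nat \<Rightarrow> real" where
  "mulv T M x l = (\<Sum>k<T. M l k * x k)"

definition E_std :: "nat \<Rightarrow> real \<Rightarrow> real \<Rightarrow> real \<Rightarrow> real \<Rightarrow> (nat \<Rightarrow> real) \<Rightarrow> (nat \<Rightarrow> real) \<Rightarrow> nat \<Rightarrow> real" where
  "E_std T dt E0 eta_c eta_d Pc Pd l =
     E0 + eta_c * mulv T (Amat dt) Pc l - (1 / eta_d) * mulv T (Amat dt) Pd l"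

definition E_simp :: "nat \<Rightarrow> real \<Rightarrow> real \<Rightarrow> real \<Rightarrow> (nat \<Rightarrow> real) \<Rightarrow> nat \<Rightarrow> real" where
  "E_simp T dt E0 eta Pb l = E0 + eta * mulv T (Amat dt) Pb l"

end

theory Submission
  imports Defs
begin

text \<open>Both trajectories are E0 plus the nonnegative matrix A applied to a per-step net
  energy input, so it suffices to compare the inputs step by step. A relaxed pair with the
  same difference as a complementary pair exceeds it by a common amount s \<ge> 0 in both
  components, and this costs (1/eta_d - eta_c) s \<ge> 0. A complementary pair has only one
  nonzero component, on which eta_c \<le> eta resp. eta \<le> 1/eta_d is the claim.\<close>

lemma Amat_nonneg: "0 \<le> dt \<Longrightarrow> 0 \<le> Amat dt l k"
  by (simp add: Amat_def)

lemma mulv_mono: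
  assumes "\<forall>k<T. 0 \<le> M l k" and "\<forall>k<T. x k \<le> y k"
  shows "mulv T M x l \<le> mulv T M y l"
  unfolding mulv_def using assms by (auto intro!: sum_mono mult_left_mono)

lemma E_std_eq_mulv:
  "E_std T dt E0 eta_c eta_d Pc Pd l
     = E0 + mulv T (Amat dt) (\<lambda>k. eta_c * Pc k - (1 / eta_d) * Pd k) l"
  by (simp add: E_std_def mulv_def sum_distrib_left sum_subtractf algebra_simps)

lemma E_simp_eq_mulv:
  "E_simp T dt E0 eta Pb l = E0 + mulv T (Amat dt) (\<lambda>k. eta * Pb k) l"
  by (simp add: E_simp_def mulv_def sum_distrib_left algebra_simps)

lemma relaxed_net_input_le_complementary:
  fixes eta_c eta_d pc pd prc prd :: real
  assumes "eta_c \<le> 1 / eta_d"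
    and "0 \<le> pc" "0 \<le> pd" "pc * pd = 0" "pc - pd = prc - prd" "0 \<le> prc" "0 \<le> prd"
  shows "eta_c * prc - (1 / eta_d) * prd \<le> eta_c * pc - (1 / eta_d) * pd"
proof -
  define s where "s = prc - pc"
  have "0 \<le> s"
    using assms(2-7) unfolding s_def by (cases "pc = 0") auto
  have "prc = pc + s" "prd = pd + s"
    using assms(5) unfolding s_def by linarith+
  moreover have "eta_c * s \<le> (1 / eta_d) * s"
    using assms(1) \<open>0 \<le> s\<close> by (rule mult_right_mono)
  ultimately show ?thesis
    by (simp add: algebra_simps add_divide_distrib)
qed

lemma complementary_net_input_le_simplified:
  fixes eta_c eta_d eta pc pd :: real
  assumes "eta_c \<le> eta" "eta \<le> 1 / eta_d" and "0 \<le> pc" "0 \<le> pd" "pc * pd = 0"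
  shows "eta_c * pc - (1 / eta_d) * pd \<le> eta * (pc - pd)"
proof (cases "pc = 0")
  case True
  have "eta * pd \<le> (1 / eta_d) * pd"
    using assms(2,4) by (rule mult_right_mono)
  with True show ?thesis by simp
next
  case False
  then have "pd = 0" using assms(5) by simp
  moreover have "eta_c * pc \<le> eta * pc"
    using assms(1,3) by (rule mult_right_mono)
  ultimately show ?thesis by simp
qed

theorem lemma1:
  fixes T :: nat and dt E0 Pmax eta_c eta_d eta :: real
    and Pc Pd Prc Prd Pb :: "nat \<Rightarrow> real"
  assumes "T \<ge> 1" and "dt > 0" and "Pmax > 0"
    and "0 < eta_c" "eta_c \<le> 1" and "0 < eta_d" "eta_d \<le> 1"
    and "eta_c \<le> eta" "eta \<le> 1 / eta_d"
    and "\<forall>k<T. 0 \<le> Pc k \<and> Pc k \<le> Pmax"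
    and "\<forall>k<T. 0 \<le> Pd k \<and> Pd k \<le> Pmax"
    and "\<forall>k<T. 0 \<le> Prc k \<and> Prc k \<le> Pmax"
    and "\<forall>k<T. 0 \<le> Prd k \<and> Prd k \<le> Pmax"
    and "\<forall>k<T. Pb k = Pc k - Pd k \<and> Pb k = Prc k - Prd k"
    and "\<forall>k<T. Pc k * Pd k = 0"
    and "\<forall>k<T. Prc k * Prd k \<ge> 0"
  shows "\<forall>l<T. E_std T dt E0 eta_c eta_d Prc Prd l \<le> E_std T dt E0 eta_c eta_d Pc Pd l
              \<and> E_std T dt E0 eta_c eta_d Pc Pd l \<le> E_simp T dt E0 eta Pb l"
proof (intro allI impI conjI)
  fix l
  have A_nonneg: "\<forall>k<T. 0 \<le> Amat dt l k"
    using assms(2) by (simp add: Amat_nonneg)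
  have "\<forall>k<T. eta_c * Prc k - (1 / eta_d) * Prd k \<le> eta_c * Pc k - (1 / eta_d) * Pd k"
  proof (intro allI impI)
    fix k assume "k < T"
    show "eta_c * Prc k - (1 / eta_d) * Prd k \<le> eta_c * Pc k - (1 / eta_d) * Pd k"
      by (rule relaxed_net_input_le_complementary) (use assms(8-15) \<open>k < T\<close> in auto)
  qed
  then show "E_std T dt E0 eta_c eta_d Prc Prd l \<le> E_std T dt E0 eta_c eta_d Pc Pd l"
    unfolding E_std_eq_mulv using A_nonneg by (simp add: mulv_mono)
  have "\<forall>k<T. eta_c * Pc k - (1 / eta_d) * Pd k \<le> eta * Pb k"
  proof (intro allI impI)
    fix k assume "k < T"
    then show "eta_c * Pc k - (1 / eta_d) * Pd k \<le> eta * Pb k"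
      using complementary_net_input_le_simplified[OF assms(8,9)] assms(10,11,14,15) by simp
  qed
  then show "E_std T dt E0 eta_c eta_d Pc Pd l \<le> E_simp T dt E0 eta Pb l"
    unfolding E_std_eq_mulv E_simp_eq_mulv using A_nonneg by (simp add: mulv_mono)
qed

end
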